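(* Let $p$ be an odd prime and let $a,b,c$ be positive integers such that $c$ is a primitive divisor of $p^a-1$ and $bc$ is a primitive divisor of $p^{ab}-1$. If $bc$ is odd, then $$\Gamma\Big(\tfrac{p^{ab}-1}{bc},\,p^{ab}\Big)\;\cong\;\vec{\square}^{\,b}\,\Gamma\Big(\tfrac{p^a-1}{c},\,p^a\Big),$$ the directed Cartesian product of $b$ copies of $\Gamma(\tfrac{p^a-1}{c},p^a)$.
   Context: An integer $e$ is a primitive divisor of $p^a-1$ if $e\mid p^a-1$ and $e\nmid p^t-1$ for every $1\le t<a$. For a prime power $q$ and $k\mid q-1$, the generalized Paley graph $\Gamma(k,q)$ is the Cayley digraph $\mathrm{Cay}(\mathbb{F}_q,R_k)$ with $R_k=\{x^k:x\in\mathbb{F}_q^*\}$: vertex set $\mathbb{F}_q$, with an arc from $u$ to $v$ iff $v-u\in R_k$ (two opposite arcs are regarded as one undirected edge). The directed Cartesian product $\Gamma_1\,\vec{\square}\cdots\vec{\square}\,\Gamma_b$ of digraphs has vertex set $V(\Gamma_1)\times\cdots\times V(\Gamma_b)$, with an arc from $(v_i)$ to $(w_i)$ iff there is exactly one $j$ with $v_jw_j$ an arc of $\Gamma_j$ and $v_i=w_i$ for all $i\ne j$. *)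

theory Defs
  imports "HOL-Library.FuncSet" "HOL-Computational_Algebra.Primes"
begin

definition primitive_divisor :: "nat \<Rightarrow> nat \<Rightarrow> nat \<Rightarrow> bool" where
  "primitive_divisor p a e \<longleftrightarrow>
     e dvd p ^ a - 1 \<and> (\<forall>t. 1 \<le> t \<and> t < a \<longrightarrow> \<not> e dvd p ^ t - 1)"

text \<open>Arc relation of the generalized Paley graph Gamma(k,q) = Cay(F_q, R_k),
  where F_q is the finite field given by the type 'a.\<close>
definition gpaley_arc :: "nat \<Rightarrow> 'a::field \<Rightarrow> 'a \<Rightarrow> bool" where
  "gpaley_arc k u v \<longleftrightarrow> (\<exists>x. x \<noteq> 0 \<and> v - u = x ^ k)"

text \<open>Vertex set and arc relation of the directed Cartesian product of b copies
  of a digraph with vertex set UNIV and arc relation A; vertices are b-tuples,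
  represented as extensional functions on {..<b}.\<close>
definition cart_power_verts :: "nat \<Rightarrow> (nat \<Rightarrow> 'a) set" where
  "cart_power_verts b = PiE {..<b} (\<lambda>_. UNIV)"

definition cart_power_arc :: "nat \<Rightarrow> ('a \<Rightarrow> 'a \<Rightarrow> bool) \<Rightarrow> (nat \<Rightarrow> 'a) \<Rightarrow> (nat \<Rightarrow> 'a) \<Rightarrow> bool" where
  "cart_power_arc b A v w \<longleftrightarrow>
     (\<exists>!j. j < b \<and> A (v j) (w j) \<and> (\<forall>i<b. i \<noteq> j \<longrightarrow> v i = w i))"

definition digraph_iso :: "('a \<Rightarrow> 'a \<Rightarrow> bool) \<Rightarrow> 'b set \<Rightarrow> ('b \<Rightarrow> 'b \<Rightarrow> bool) \<Rightarrow> bool" where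
  "digraph_iso A V B \<longleftrightarrow>
     (\<exists>f. bij_betw f UNIV V \<and> (\<forall>u v. A u v \<longleftrightarrow> B (f u) (f v)))"

end

theory Submission
  imports Defs "HOL-Algebra.Multiplicative_Group" "HOL-Number_Theory.Residues"
    "HOL-Computational_Algebra.Polynomial"
begin

text \<open>Let \<open>K\<close> and \<open>F\<close> be the fields with \<open>q = p ^ a\<close> and \<open>q ^ b\<close> elements. The connection sets of
  the two Paley graphs are the groups of \<open>c\<close>-th roots of unity in \<open>K\<close> and of \<open>b c\<close>-th roots of unity
  in \<open>F\<close>. Embed \<open>K\<close> into \<open>F\<close> by a field homomorphism \<open>\<psi>\<close> and let \<open>\<zeta> \<in> F\<close> have order \<open>b c\<close>. As \<open>b c\<close>
  is a primitive divisor of \<open>q ^ b - 1\<close>, the Frobenius conjugates \<open>\<zeta> ^ q ^ t\<close>, \<open>t < b\<close>, are distinct,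
  so \<open>1, \<zeta>, \<dots>, \<zeta> ^ (b - 1)\<close> are linearly independent over \<open>\<psi> K\<close> and \<open>d \<mapsto> \<Sum>i<b. \<psi> (d i) * \<zeta> ^ i\<close> is
  an additive bijection \<open>K ^ b \<rightarrow> F\<close>. Every \<open>b c\<close>-th root of unity is \<open>\<zeta> ^ j * \<theta> ^ r\<close> with \<open>j < b\<close>
  and \<open>\<theta> = \<zeta> ^ b\<close> of order \<open>c\<close>, and \<open>\<theta> ^ r\<close> is the image of a \<open>c\<close>-th root of unity of \<open>K\<close>; hence the
  bijection maps the vectors with exactly one nonzero coordinate, a \<open>c\<close>-th root of unity, onto the
  \<open>b c\<close>-th roots of unity, which makes it an isomorphism of Cayley digraphs.\<close>

definition has_mult_order :: "'a::monoid_mult \<Rightarrow> nat \<Rightarrow> bool" where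
  "has_mult_order z n \<longleftrightarrow> n > 0 \<and> z ^ n = 1 \<and> inj_on (\<lambda>i. z ^ i) {..<n}"

lemma power_eq_power_mod:
  fixes z :: "'a::monoid_mult"
  assumes "z ^ n = 1"
  shows "z ^ m = z ^ (m mod n)"
proof -
  have "z ^ m = z ^ (n * (m div n) + m mod n)"
    by simp
  also have "\<dots> = (z ^ n) ^ (m div n) * z ^ (m mod n)"
    by (simp only: power_add power_mult)
  finally show ?thesis
    using assms by simp
qed

lemma has_mult_order_power_eq_iff:
  assumes "has_mult_order z n"
  shows "z ^ m = z ^ m' \<longleftrightarrow> m mod n = m' mod n"
proof
  assume "z ^ m = z ^ m'"
  with assms have "z ^ (m mod n) = z ^ (m' mod n)"
    by (metis has_mult_order_def power_eq_power_mod)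
  moreover have "m mod n < n" "m' mod n < n"
    using assms by (auto simp: has_mult_order_def)
  ultimately show "m mod n = m' mod n"
    using assms unfolding has_mult_order_def inj_on_def by blast
qed (use assms power_eq_power_mod in \<open>metis has_mult_order_def\<close>)

lemma has_mult_order_power_eq_1_iff:
  assumes "has_mult_order z n"
  shows "z ^ m = 1 \<longleftrightarrow> n dvd m"
  using has_mult_order_power_eq_iff[OF assms, of m 0] by (simp add: dvd_eq_mod_eq_0)

lemma has_mult_order_power:
  assumes "has_mult_order z (k * n)"
  shows "has_mult_order (z ^ k) n"
  unfolding has_mult_order_def
proof (intro conjI)
  show "n > 0" "(z ^ k) ^ n = 1"
    using assms by (auto simp: has_mult_order_def simp flip: power_mult)
  show "inj_on (\<lambda>i. (z ^ k) ^ i) {..<n}"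
  proof (rule inj_onI)
    fix i j assume "i \<in> {..<n}" "j \<in> {..<n}" "(z ^ k) ^ i = (z ^ k) ^ j"
    moreover from this have "(k * i) mod (k * n) = (k * j) mod (k * n)"
      using has_mult_order_power_eq_iff[OF assms] by (simp flip: power_mult)
    ultimately show "i = j"
      using assms by (auto simp: has_mult_order_def)
  qed
qed

lemma degree_monom_minus_1:
  assumes "n > 0"
  shows "degree (Polynomial.monom (1::'a::{comm_ring_1,ring_no_zero_divisors}) n - 1) = n"
proof -
  have "degree (Polynomial.monom (1::'a) n + (- 1)) = n"
    using assms by (subst degree_add_eq_left) (auto simp: degree_monom_eq)
  then show ?thesis
    by simp
qed

lemma roots_of_unity_finite_card_le:
  assumes "n > 0"
  shows "finite {y::'a::idom. y ^ n = 1}" and "card {y::'a. y ^ n = 1} \<le> n"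
proof -
  define P where "P = Polynomial.monom (1::'a) n - 1"
  have deg: "degree P = n"
    unfolding P_def using assms by (rule degree_monom_minus_1)
  have roots: "{y. y ^ n = 1} = {y. poly P y = 0}"
    by (simp add: P_def poly_monom)
  have "P \<noteq> 0"
    using deg assms by auto
  then show "finite {y::'a. y ^ n = 1}" and "card {y::'a. y ^ n = 1} \<le> n"
    unfolding roots using poly_roots_finite card_poly_roots_bound deg by auto
qed

lemma card_roots_of_unity:
  fixes z :: "'a::idom"
  assumes "has_mult_order z n"
  shows "card {y::'a. y ^ n = 1} = n"
proof (rule antisym)
  show "card {y::'a. y ^ n = 1} \<le> n"
    using assms roots_of_unity_finite_card_le by (auto simp: has_mult_order_def)
  have "(z ^ m) ^ n = 1" for m
    using assms by (metis has_mult_order_def mult.commute power_mult power_one)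
  then have "(\<lambda>m. z ^ m) ` {..<n} \<subseteq> {y. y ^ n = 1}"
    by auto
  moreover have "finite {y::'a. y ^ n = 1}"
    using assms roots_of_unity_finite_card_le by (auto simp: has_mult_order_def)
  ultimately have "card ((\<lambda>m. z ^ m) ` {..<n}) \<le> card {y::'a. y ^ n = 1}"
    by (simp add: card_mono)
  then show "n \<le> card {y::'a. y ^ n = 1}"
    using assms by (simp add: has_mult_order_def card_image)
qed

definition field_ring :: "'a::field ring" where
  "field_ring = \<lparr>carrier = UNIV, monoid.mult = (*), one = 1, zero = 0, add = (+)\<rparr>"

lemma field_field_ring: "field (field_ring :: 'a::field ring)"
proof -
  have "\<exists>y. x + y = 0" for x :: 'a
    using add.right_inverse by blast
  moreover have "\<exists>y. x * y = 1" if "x \<noteq> 0" for x :: 'a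
    using that by (intro exI[of _ "inverse x"]) simp
  ultimately show ?thesis
    unfolding field_ring_def by unfold_locales (auto simp: algebra_simps Units_def)
qed

lemma field_ring_simps [simp]:
  "carrier field_ring = UNIV"
  "\<zero>\<^bsub>field_ring\<^esub> = 0"
  "\<one>\<^bsub>field_ring\<^esub> = 1"
  by (simp_all add: field_ring_def)

lemma nat_pow_field_ring [simp]: "x [^]\<^bsub>field_ring\<^esub> (n::nat) = x ^ n"
  by (induction n) (simp_all add: field_ring_def power_commutes)

lemma finite_field_card_ge_2: "card (UNIV :: 'a::{finite,field} set) \<ge> 2"
proof -
  have "card {0::'a, 1} \<le> card (UNIV :: 'a set)"
    by (rule card_mono) auto
  then show ?thesis by simp
qed

lemma finite_field_power_card_minus_1:
  fixes x :: "'a::{finite,field}"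
  assumes "x \<noteq> 0"
  shows "x ^ (card (UNIV :: 'a set) - 1) = 1"
proof -
  interpret R: field "field_ring :: 'a ring"
    by (rule field_field_ring)
  interpret G: group "mult_of (field_ring :: 'a ring)"
    using R.field_mult_group .
  have "Coset.order (mult_of (field_ring :: 'a ring)) = card (UNIV :: 'a set) - 1"
    by (simp add: R.order_mult_of Coset.order_def)
  with G.pow_order_eq_1[of x] assms show ?thesis
    by (simp add: nat_pow_mult_of)
qed

lemma finite_field_power_card:
  fixes x :: "'a::{finite,field}"
  shows "x ^ card (UNIV :: 'a set) = x"
proof (cases "x = 0")
  case False
  have "x ^ card (UNIV :: 'a set) = x * x ^ (card (UNIV :: 'a set) - 1)"
    using finite_field_card_ge_2[where 'a='a] by (simp flip: power_Suc)
  with finite_field_power_card_minus_1[OF False] show ?thesis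
    by simp
qed (use finite_field_card_ge_2[where 'a='a] in simp)

lemma finite_field_primitive_element:
  obtains g :: "'a::{finite,field}"
  where "has_mult_order g (card (UNIV :: 'a set) - 1)" and "\<And>x. x \<noteq> 0 \<Longrightarrow> \<exists>i. x = g ^ i"
proof -
  interpret R: field "field_ring :: 'a ring"
    by (rule field_field_ring)
  obtain g :: 'a where "g \<in> carrier (mult_of field_ring)"
    and g_gen: "carrier (mult_of (field_ring :: 'a ring)) = {g [^]\<^bsub>field_ring\<^esub> i | i::nat. i \<in> UNIV}"
    using R.finite_field_mult_group_has_gen by (auto simp: nat_pow_mult_of)
  then have g: "g \<noteq> 0"
    by simp
  have gen: "\<exists>i. x = g ^ i" if "x \<noteq> 0" for x :: 'a
    using g_gen that by auto
  define N where "N = card (UNIV :: 'a set) - 1"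
  have N: "N > 0" "g ^ N = 1"
    using finite_field_card_ge_2[where 'a='a] finite_field_power_card_minus_1[OF g]
    by (simp_all add: N_def)
  have "(\<lambda>i. g ^ i) ` {..<N} = UNIV - {0}"
  proof
    show "UNIV - {0} \<subseteq> (\<lambda>i. g ^ i) ` {..<N}"
    proof
      fix x :: 'a assume "x \<in> UNIV - {0}"
      then obtain i where "x = g ^ i"
        using gen by blast
      then have "x = g ^ (i mod N)"
        using power_eq_power_mod[OF N(2)] by simp
      then show "x \<in> (\<lambda>i. g ^ i) ` {..<N}"
        using N(1) by auto
    qed
  qed (use g in auto)
  then have "inj_on (\<lambda>i. g ^ i) {..<N}"
    by (intro eq_card_imp_inj_on) (simp_all add: card_Diff_singleton N_def)
  with N have "has_mult_order g N"
    by (simp add: has_mult_order_def)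
  with gen show ?thesis
    using that N_def by blast
qed

lemma finite_field_power_eq_iff_root_of_unity:
  fixes y :: "'a::{finite,field}"
  assumes "k * n = card (UNIV :: 'a set) - 1"
  shows "(\<exists>s. s \<noteq> 0 \<and> y = s ^ k) \<longleftrightarrow> y ^ n = 1"
proof
  assume "\<exists>s. s \<noteq> 0 \<and> y = s ^ k"
  then obtain s where "s \<noteq> 0" "y = s ^ k" by blast
  then show "y ^ n = 1"
    using assms finite_field_power_card_minus_1 by (metis power_mult)
next
  assume y: "y ^ n = 1"
  obtain g :: 'a where g: "has_mult_order g (k * n)" and gen: "\<And>x. x \<noteq> 0 \<Longrightarrow> \<exists>i. x = g ^ i"
    using finite_field_primitive_element assms by metis
  have "n > 0"
    using g by (auto simp: has_mult_order_def)
  with y have "y \<noteq> 0"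
    by (auto simp: power_0_left)
  then obtain i where i: "y = g ^ i"
    using gen by blast
  with y have "k * n dvd i * n"
    using has_mult_order_power_eq_1_iff[OF g] by (simp flip: power_mult)
  with \<open>n > 0\<close> obtain j where "i = k * j"
    by (auto elim: dvdE)
  with i g show "\<exists>s. s \<noteq> 0 \<and> y = s ^ k"
    by (intro exI[of _ "g ^ j"]) (auto simp: has_mult_order_def power_mult mult.commute power_0_left)
qed

lemma finite_field_roots_of_unity_cyclic:
  assumes "k * n = card (UNIV :: 'a set) - 1"
  obtains z :: "'a::{finite,field}" where "has_mult_order z n" and "\<And>y. y ^ n = 1 \<Longrightarrow> \<exists>m. y = z ^ m"
proof -
  obtain g :: 'a where g: "has_mult_order g (k * n)" and gen: "\<And>x. x \<noteq> 0 \<Longrightarrow> \<exists>i. x = g ^ i"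
    using finite_field_primitive_element assms by metis
  have "\<exists>m. y = (g ^ k) ^ m" if y: "y ^ n = 1" for y
  proof -
    obtain s where "s \<noteq> 0" "y = s ^ k"
      using finite_field_power_eq_iff_root_of_unity[OF assms] y by blast
    then show ?thesis
      using gen by (metis mult.commute power_mult)
  qed
  with has_mult_order_power[OF g] that show ?thesis
    by blast
qed

lemma finite_field_exists_mult_order:
  assumes "n dvd card (UNIV :: 'a set) - 1"
  obtains z :: "'a::{finite,field}" where "has_mult_order z n"
proof -
  from assms obtain k where "card (UNIV :: 'a set) - 1 = n * k"
    by (elim dvdE)
  then have "k * n = card (UNIV :: 'a set) - 1"
    by simp
  with finite_field_roots_of_unity_cyclic that show ?thesis
    by blast
qed

lemma gpaley_arc_iff_root_of_unity:
  fixes u v :: "'a::{finite,field}"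
  assumes "k * n = card (UNIV :: 'a set) - 1"
  shows "gpaley_arc k u v \<longleftrightarrow> (v - u) ^ n = 1"
  unfolding gpaley_arc_def finite_field_power_eq_iff_root_of_unity[OF assms, symmetric] by blast

lemma CHAR_finite_field:
  assumes "prime p" and "card (UNIV :: 'a::{finite,field} set) = p ^ m"
  shows "CHAR('a) = p"
proof -
  have "CHAR('a) > 0"
    by (rule finite_imp_CHAR_pos) simp
  then have "prime CHAR('a)"
    by (rule prime_CHAR_semidom)
  moreover have "CHAR('a) dvd p ^ m"
    using CHAR_dvd_CARD[where 'a='a] assms(2) by metis
  ultimately show ?thesis
    using assms(1) prime_dvd_power primes_dvd_imp_eq by blast
qed

lemma of_int_power_CHAR:
  assumes "prime CHAR('a::comm_ring_1)"
  shows "(of_int n :: 'a) ^ CHAR('a) = of_int n"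
proof -
  have of_nat: "(of_nat m :: 'a) ^ CHAR('a) = of_nat m" for m
    using freshmans_dream_sum[OF assms refl, of "\<lambda>_. 1" "{..<m}"] by simp
  have "(of_int n :: 'a) = of_nat (nat (n mod int CHAR('a)))"
    using assms by (simp add: of_int_eq_iff_cong_CHAR cong_def prime_gt_0_nat)
  then show ?thesis
    using of_nat by simp
qed

text \<open>A polynomial whose coefficients are fixed by the Frobenius power \<open>x \<mapsto> x ^ Q\<close> commutes
  with it, so if it vanishes at \<open>z\<close> it vanishes at all conjugates \<open>z ^ Q ^ t\<close>; if \<open>n\<close> of them are
  distinct, a polynomial of degree below \<open>n\<close> must be zero.\<close>
lemma Frobenius_fixed_coeffs_eq_0:
  fixes z :: "'a::field" and l :: "nat \<Rightarrow> 'a"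
  assumes char: "prime CHAR('a)" and Q: "Q = CHAR('a) ^ m"
    and fixed: "\<And>i. i < n \<Longrightarrow> l i ^ Q = l i"
    and conjugates: "inj_on (\<lambda>t. z ^ (Q ^ t)) {..<n}"
    and sum: "(\<Sum>i<n. l i * z ^ i) = 0"
    and "i < n"
  shows "l i = 0"
proof -
  define P where "P = (\<Sum>i<n. Polynomial.monom (l i) i)"
  have poly_P: "poly P x = (\<Sum>i<n. l i * x ^ i)" for x
    by (simp add: P_def poly_sum poly_monom)
  have coeff_P: "coeff P j = (if j < n then l j else 0)" for j
    by (simp add: P_def coeff_sum coeff_monom)
  have poly_P_Frobenius: "poly P (w ^ Q) = poly P w ^ Q" for w
  proof -
    have "poly P (w ^ Q) = (\<Sum>i<n. (l i * w ^ i) ^ Q)"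
      unfolding poly_P
      by (intro sum.cong refl) (simp add: fixed power_mult_distrib mult.commute flip: power_mult)
    also have "\<dots> = poly P w ^ Q"
      unfolding poly_P by (rule freshmans_dream_sum'[OF char Q, symmetric])
    finally show ?thesis .
  qed
  have roots: "poly P (z ^ (Q ^ t)) = 0" for t
  proof (induction t)
    case 0
    then show ?case using sum by (simp add: poly_P)
  next
    case (Suc t)
    have "z ^ (Q ^ Suc t) = (z ^ (Q ^ t)) ^ Q"
      by (simp add: mult.commute flip: power_mult)
    then show ?case
      using poly_P_Frobenius Suc char Q by (simp add: prime_gt_0_nat)
  qed
  have "P = 0"
  proof (rule ccontr)
    assume "P \<noteq> 0"
    then have "n > 0"
      by (cases n) (auto simp: P_def)
    have "n = card ((\<lambda>t. z ^ (Q ^ t)) ` {..<n})"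
      using conjugates by (simp add: card_image)
    also have "\<dots> \<le> card {x. poly P x = 0}"
      using poly_roots_finite[OF \<open>P \<noteq> 0\<close>] roots by (intro card_mono) auto
    also have "\<dots> \<le> degree P"
      by (rule card_poly_roots_bound[OF \<open>P \<noteq> 0\<close>])
    also have "degree P \<le> n - 1"
      by (rule degree_le) (auto simp: coeff_P)
    finally show False
      using \<open>n > 0\<close> by simp
  qed
  then show ?thesis
    using coeff_P[of i] \<open>i < n\<close> by simp
qed

lemma primitive_divisor_coprime:
  assumes "primitive_divisor Q n N" and "n > 0" and "Q > 0"
  shows "coprime N Q"
proof -
  have "coprime (Q ^ n - 1) Q"
    using assms(2,3) coprime_diff_one_left_nat[of "Q ^ n"] by (simp add: coprime_power_right_iff)
  then show ?thesis
    using assms(1) coprime_divisors[OF _ dvd_refl] by (auto simp: primitive_divisor_def)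
qed

lemma primitive_divisor_inj_on_conjugates:
  assumes z: "has_mult_order z N" and prim: "primitive_divisor Q n N" and "Q > 0"
  shows "inj_on (\<lambda>t. z ^ (Q ^ t)) {..<n}"
proof -
  have False if st: "s < t" "t < n" and eq: "z ^ (Q ^ s) = z ^ (Q ^ t)" for s t
  proof -
    have "Q ^ s \<le> Q ^ t"
      using \<open>Q > 0\<close> st by (simp add: power_increasing)
    moreover have "Q ^ t mod N = Q ^ s mod N"
      using has_mult_order_power_eq_iff[OF z] eq by metis
    ultimately have "N dvd Q ^ t - Q ^ s"
      using mod_eq_dvd_iff_nat by blast
    moreover have "Q ^ t - Q ^ s = Q ^ s * (Q ^ (t - s) - 1)"
      using st by (simp add: diff_mult_distrib2 flip: power_add)
    moreover have "coprime N (Q ^ s)"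
      using primitive_divisor_coprime[OF prim _ \<open>Q > 0\<close>] st by simp
    ultimately have "N dvd Q ^ (t - s) - 1"
      using coprime_dvd_mult_right_iff by metis
    moreover have "1 \<le> t - s" "t - s < n"
      using st by simp_all
    ultimately show False
      using prim unfolding primitive_divisor_def by blast
  qed
  then show ?thesis
    by (intro inj_onI) (metis lessThan_iff linorder_neqE_nat)
qed

lemma primitive_divisor_power_base:
  assumes "primitive_divisor p (a * b) e" and "a > 0"
  shows "primitive_divisor (p ^ a) b e"
  using assms unfolding primitive_divisor_def by (auto simp flip: power_mult)

lemma primitive_divisor_power_minus_1:
  assumes "p > 1"
  shows "primitive_divisor p a (p ^ a - 1)"
  unfolding primitive_divisor_def
proof (intro conjI allI impI)
  fix t assume t: "1 \<le> t \<and> t < a"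
  then have "1 < p ^ t" "p ^ t < p ^ a"
    using assms one_less_power[of p t] by (simp_all add: power_strict_increasing_iff)
  then have "0 < p ^ t - 1" "p ^ t - 1 < p ^ a - 1"
    by simp_all
  then show "\<not> p ^ a - 1 dvd p ^ t - 1"
    using nat_dvd_not_less by blast
qed simp

lemma map_poly_of_int_add:
  "map_poly (of_int :: int \<Rightarrow> 'a::comm_ring_1) (P + Q) = map_poly of_int P + map_poly of_int Q"
  by (rule poly_eqI) (simp add: coeff_map_poly)

lemma map_poly_of_int_diff:
  "map_poly (of_int :: int \<Rightarrow> 'a::comm_ring_1) (P - Q) = map_poly of_int P - map_poly of_int Q"
  by (rule poly_eqI) (simp add: coeff_map_poly)

lemma map_poly_of_int_mult:
  "map_poly (of_int :: int \<Rightarrow> 'a::comm_ring_1) (P * Q) = map_poly of_int P * map_poly of_int Q"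
  by (rule poly_eqI) (simp add: coeff_map_poly coeff_mult)

lemmas map_poly_of_int_simps = map_poly_of_int_add map_poly_of_int_diff map_poly_of_int_mult

lemma degree_map_poly_of_int_monic:
  assumes "lead_coeff G = 1"
  shows "degree (map_poly (of_int :: int \<Rightarrow> 'a::comm_ring_1) G) = degree G"
proof (rule antisym)
  show "degree (map_poly (of_int :: int \<Rightarrow> 'a) G) \<le> degree G"
    by (intro degree_le) (simp add: coeff_map_poly coeff_eq_0)
  show "degree G \<le> degree (map_poly (of_int :: int \<Rightarrow> 'a) G)"
    using assms by (intro le_degree) (simp add: coeff_map_poly)
qed

lemma poly_map_poly_of_int_eq_sum:
  assumes "degree P < n"
  shows "poly (map_poly (of_int :: int \<Rightarrow> 'a::comm_ring_1) P) x = (\<Sum>i<n. of_int (coeff P i) * x ^ i)"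
proof -
  have "map_poly (of_int :: int \<Rightarrow> 'a) P = (\<Sum>i<n. Polynomial.monom (of_int (coeff P i)) i)"
    using assms by (intro poly_eqI) (simp add: coeff_map_poly coeff_sum coeff_monom coeff_eq_0)
  then show ?thesis
    by (simp add: poly_sum poly_monom)
qed

lemma CHAR_dvd_coeff_if_poly_of_int_root:
  fixes \<omega> :: "'a::field" and T :: "int poly"
  assumes char: "prime CHAR('a)"
    and conjugates: "inj_on (\<lambda>t. \<omega> ^ (CHAR('a) ^ t)) {..<a}"
    and deg: "degree T < a" and root: "poly (map_poly of_int T) \<omega> = 0"
  shows "int CHAR('a) dvd coeff T i"
proof (cases "i < a")
  case True
  have "(of_int (coeff T i) :: 'a) = 0"
  proof (rule Frobenius_fixed_coeffs_eq_0
      [where Q = "CHAR('a)" and m = 1 and l = "\<lambda>j. of_int (coeff T j)", OF char _ _ conjugates _ True])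
    show "(of_int (coeff T j) :: 'a) ^ CHAR('a) = of_int (coeff T j)" for j
      by (rule of_int_power_CHAR[OF char])
    show "(\<Sum>j<a. of_int (coeff T j) * \<omega> ^ j) = 0"
      using root by (simp add: poly_map_poly_of_int_eq_sum[OF deg])
  qed simp
  then show ?thesis
    by (simp add: of_int_eq_0_iff_char_dvd)
next
  case False
  with deg show ?thesis
    by (simp add: coeff_eq_0)
qed

lemma finite_field_poly_of_int_surj:
  fixes \<omega> :: "'a::{finite,field}"
  assumes char: "prime CHAR('a)" and card: "card (UNIV :: 'a set) = CHAR('a) ^ a"
    and conjugates: "inj_on (\<lambda>t. \<omega> ^ (CHAR('a) ^ t)) {..<a}"
  obtains P where "degree P < a" and "poly (map_poly of_int P) \<omega> = x"
proof -
  define p where "p = CHAR('a)"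
  have "a > 0"
    using card finite_field_card_ge_2[where 'a='a] by (cases a) auto
  define E where "E = {..<a} \<rightarrow>\<^sub>E {..<p}"
  define B where "B e = (\<Sum>i<a. Polynomial.monom (int (e i)) i)" for e
  have coeff_B: "coeff (B e) j = (if j < a then int (e j) else 0)" for e j
    by (simp add: B_def coeff_sum coeff_monom)
  have deg_B: "degree (B e) < a" for e
    using \<open>a > 0\<close> by (intro le_less_trans[OF degree_le[of "a - 1"]]) (auto simp: coeff_B)
  have "inj_on (\<lambda>e. poly (map_poly of_int (B e)) \<omega>) E"
  proof (rule inj_onI)
    fix e e' assume e: "e \<in> E" "e' \<in> E"
      and eq: "poly (map_poly of_int (B e)) \<omega> = poly (map_poly of_int (B e')) \<omega>"
    show "e = e'"
    proof (rule PiE_ext[OF e[unfolded E_def]])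
      fix i assume "i \<in> {..<a}"
      have "int p dvd coeff (B e - B e') i"
        unfolding p_def using eq
        by (intro CHAR_dvd_coeff_if_poly_of_int_root[OF char conjugates])
           (simp_all add: deg_B degree_diff_less map_poly_of_int_diff)
      with \<open>i \<in> {..<a}\<close> have "[e i = e' i] (mod p)"
        by (simp add: coeff_B cong_iff_dvd_diff flip: cong_int_iff)
      moreover have "e i < p" "e' i < p"
        using e \<open>i \<in> {..<a}\<close> by (auto simp: E_def)
      ultimately show "e i = e' i"
        by (rule cong_less_modulus_unique_nat)
    qed
  qed
  then have "card ((\<lambda>e. poly (map_poly of_int (B e)) \<omega>) ` E) = card (UNIV :: 'a set)"
    using card by (simp add: card_image E_def card_PiE p_def)
  then have "(\<lambda>e. poly (map_poly of_int (B e)) \<omega>) ` E = UNIV"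
    by (intro card_subset_eq) simp_all
  then obtain e where "x = poly (map_poly of_int (B e)) \<omega>"
    by blast
  with deg_B that show ?thesis
    by blast
qed

lemma dvd_X_power_minus_1_has_root:
  fixes G :: "'a::idom poly" and z :: 'a
  assumes z: "has_mult_order z N" and dvd: "G dvd Polynomial.monom 1 N - 1" and "degree G > 0"
  shows "\<exists>x. poly G x = 0"
proof (rule ccontr)
  assume no_root: "\<nexists>x. poly G x = 0"
  obtain S where S: "Polynomial.monom 1 N - 1 = G * S"
    using dvd by (elim dvdE)
  have "N > 0"
    using z by (simp add: has_mult_order_def)
  then have deg: "degree (G * S) = N"
    using degree_monom_minus_1[OF \<open>N > 0\<close>, where 'a='a] by (simp only: S)
  then have "G \<noteq> 0" "S \<noteq> 0"
    using \<open>N > 0\<close> by auto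
  then have "degree S < N"
    using deg degree_mult_eq \<open>degree G > 0\<close> by fastforce
  have "{y::'a. y ^ N = 1} \<subseteq> {y::'a. poly S y = 0}"
  proof
    fix y assume "y \<in> {y::'a. y ^ N = 1}"
    then have "poly (Polynomial.monom 1 N - 1) y = 0"
      by (simp add: poly_monom)
    then have "poly G y * poly S y = 0"
      by (simp only: S poly_mult)
    then show "y \<in> {y::'a. poly S y = 0}"
      using no_root by simp
  qed
  then have "card {y::'a. y ^ N = 1} \<le> card {y::'a. poly S y = 0}"
    by (intro card_mono poly_roots_finite \<open>S \<noteq> 0\<close>)
  also have "\<dots> \<le> degree S"
    by (rule card_poly_roots_bound[OF \<open>S \<noteq> 0\<close>])
  finally show False
    using card_roots_of_unity[OF z] \<open>degree S < N\<close> by simp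
qed

locale field_hom =
  fixes \<psi> :: "'a::field \<Rightarrow> 'b::field"
  assumes hom_1: "\<psi> 1 = 1"
    and hom_add: "\<psi> (x + y) = \<psi> x + \<psi> y"
    and hom_mult: "\<psi> (x * y) = \<psi> x * \<psi> y"
begin

lemma hom_0: "\<psi> 0 = 0"
proof -
  have "\<psi> 0 = \<psi> 0 + \<psi> 0"
    using hom_add[of 0 0] by simp
  then show ?thesis
    by (metis add_cancel_left_right)
qed

lemma hom_diff: "\<psi> (x - y) = \<psi> x - \<psi> y"
  using hom_add[of "x - y" y] by (simp add: algebra_simps)

lemma hom_power: "\<psi> (x ^ n) = \<psi> x ^ n"
  by (induction n) (simp_all add: hom_1 hom_mult)

lemma hom_eq_0_iff: "\<psi> x = 0 \<longleftrightarrow> x = 0"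
proof
  assume "\<psi> x = 0"
  show "x = 0"
  proof (rule ccontr)
    assume "x \<noteq> 0"
    then have "\<psi> x * \<psi> (inverse x) = 1"
      by (simp add: hom_1 flip: hom_mult)
    with \<open>\<psi> x = 0\<close> show False
      by simp
  qed
qed (simp add: hom_0)

lemma inj: "inj \<psi>"
  by (rule injI) (metis hom_diff hom_eq_0_iff eq_iff_diff_eq_0)

end

lemma map_poly_of_int_dvd_if_root:
  fixes \<omega> :: "'K::field" and G D :: "int poly"
  assumes monic: "lead_coeff G = 1" and root: "poly (map_poly of_int G) \<omega> = 0"
    and kernel: "\<And>T. degree T < degree G \<Longrightarrow> poly (map_poly of_int T) \<omega> = 0 \<Longrightarrow>
                   map_poly (of_int :: int \<Rightarrow> 'F::comm_ring_1) T = 0"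
    and "poly (map_poly of_int D) \<omega> = 0"
  shows "map_poly (of_int :: int \<Rightarrow> 'F) G dvd map_poly of_int D"
proof -
  have "degree G \<noteq> 0"
  proof
    assume "degree G = 0"
    then have "G = 1"
      using monic degree_0_id[of G] by (simp add: one_pCons)
    with root show False
      by simp
  qed
  then have "G \<noteq> 0"
    by auto
  obtain S T where "pseudo_divmod D G = (S, T)"
    by (cases "pseudo_divmod D G")
  from pseudo_divmod[OF \<open>G \<noteq> 0\<close> this] monic
  have ST: "D = G * S + T" and "T = 0 \<or> degree T < degree G"
    by auto
  then have "degree T < degree G"
    using \<open>degree G \<noteq> 0\<close> by auto
  moreover have "poly (map_poly of_int T) \<omega> = 0"
    using assms(4) root by (simp add: ST map_poly_of_int_simps)
  ultimately have "map_poly (of_int :: int \<Rightarrow> 'F) T = 0"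
    by (rule kernel)
  then show ?thesis
    by (simp add: ST map_poly_of_int_simps)
qed

text \<open>Writing the elements of \<open>K\<close> as \<open>P(\<omega>)\<close>, the map \<open>P(\<omega>) \<mapsto> P(\<omega>')\<close> is well defined
  because every integer polynomial vanishing at \<open>\<omega>\<close> becomes a multiple of \<open>G\<close> in \<open>F\<close>.\<close>
lemma field_hom_of_common_root:
  fixes \<omega> :: "'K::field" and \<omega>' :: "'F::field" and G :: "int poly"
  assumes surj: "\<And>x. \<exists>P. poly (map_poly of_int P) \<omega> = x"
    and monic: "lead_coeff G = 1"
    and root: "poly (map_poly of_int G) \<omega> = 0" and root': "poly (map_poly of_int G) \<omega>' = 0"
    and kernel: "\<And>T. degree T < degree G \<Longrightarrow> poly (map_poly of_int T) \<omega> = 0 \<Longrightarrow>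
                   map_poly (of_int :: int \<Rightarrow> 'F) T = 0"
  obtains \<psi> :: "'K \<Rightarrow> 'F" where "field_hom \<psi>"
proof -
  have transport: "poly (map_poly of_int D) \<omega>' = 0" if "poly (map_poly of_int D) \<omega> = 0" for D
    using map_poly_of_int_dvd_if_root[OF monic root kernel that] root' by (auto elim: dvdE)
  define \<psi> where "\<psi> x = poly (map_poly of_int (SOME P. poly (map_poly of_int P) \<omega> = x)) \<omega>'" for x
  have \<psi>_eq: "\<psi> (poly (map_poly of_int P) \<omega>) = poly (map_poly of_int P) \<omega>'" for P
  proof -
    define P0 where "P0 = (SOME P0. poly (map_poly of_int P0) \<omega> = poly (map_poly of_int P) \<omega>)"
    have "poly (map_poly of_int P0) \<omega> = poly (map_poly of_int P) \<omega>"
      unfolding P0_def by (rule someI[of _ P]) (rule refl)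
    then have "poly (map_poly of_int (P0 - P)) \<omega>' = 0"
      by (intro transport) (simp add: map_poly_of_int_simps)
    then show ?thesis
      by (simp add: \<psi>_def P0_def map_poly_of_int_simps)
  qed
  have "field_hom \<psi>"
  proof
    show "\<psi> 1 = 1"
      using \<psi>_eq[of 1] by simp
    fix x y
    obtain P Q where x: "x = poly (map_poly of_int P) \<omega>" and y: "y = poly (map_poly of_int Q) \<omega>"
      using surj by metis
    show "\<psi> (x + y) = \<psi> x + \<psi> y"
      using \<psi>_eq[of "P + Q"] by (simp add: x y \<psi>_eq map_poly_of_int_simps)
    show "\<psi> (x * y) = \<psi> x * \<psi> y"
      using \<psi>_eq[of "P * Q"] by (simp add: x y \<psi>_eq map_poly_of_int_simps)
  qed
  then show ?thesis
    using that by blast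
qed

lemma monic_int_poly_root:
  fixes \<omega> :: "'a::comm_ring_1"
  assumes E: "degree E < a" "poly (map_poly of_int E) \<omega> = \<omega> ^ a"
  obtains G where "lead_coeff G = 1" and "degree G = a" and "poly (map_poly of_int G) \<omega> = 0"
proof
  define G where "G = Polynomial.monom 1 a - E"
  have coeff_G: "coeff G j = (if j = a then 1 else 0) - coeff E j" for j
    by (simp add: G_def coeff_monom)
  show deg: "degree G = a"
  proof (rule antisym)
    show "degree G \<le> a"
      using E(1) by (intro degree_le) (simp add: coeff_G coeff_eq_0)
    show "a \<le> degree G"
      using E(1) by (intro le_degree) (simp add: coeff_G coeff_eq_0)
  qed
  show "lead_coeff G = 1"
    using E(1) by (simp add: deg coeff_G coeff_eq_0)
  show "poly (map_poly of_int G) \<omega> = 0"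
    using E(2) by (simp add: G_def map_poly_of_int_simps map_poly_monom poly_monom)
qed

lemma power_minus_1_dvd_power_minus_1:
  fixes q :: nat
  assumes "q > 0"
  shows "q - 1 dvd q ^ b - 1"
proof -
  have "[q = 1] (mod q - 1)"
    using assms by (simp add: cong_def le_mod_geq)
  then have "[q ^ b = 1] (mod q - 1)"
    using cong_pow by fastforce
  then show ?thesis
    by (rule cong_to_1_nat)
qed

text \<open>The embedding is built from a generator \<open>g\<close> of \<open>K\<^sup>*\<close>: its conjugates \<open>g ^ p ^ t\<close>, \<open>t < a\<close>,
  are distinct, so \<open>1, g, \<dots>, g ^ (a - 1)\<close> is a basis of \<open>K\<close> over the prime field, and a monic
  integer relation \<open>G\<close> of degree \<open>a\<close> for \<open>g\<close> divides \<open>X ^ (p ^ a - 1) - 1\<close> modulo \<open>p\<close>, a polynomial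
  that splits into distinct linear factors over \<open>F\<close>.\<close>
lemma finite_field_embedding:
  assumes "prime p"
    and card_K: "card (UNIV :: 'K set) = p ^ a"
    and card_F: "card (UNIV :: 'F set) = p ^ (a * b)"
  obtains \<psi> :: "'K::{finite,field} \<Rightarrow> 'F::{finite,field}" where "field_hom \<psi>"
proof -
  have char_K: "CHAR('K) = p" and char_F: "CHAR('F) = p"
    using CHAR_finite_field \<open>prime p\<close> card_K card_F by blast+
  have "p > 1"
    using \<open>prime p\<close> by (rule prime_gt_1_nat)
  define N where "N = p ^ a - 1"
  obtain g :: 'K where g: "has_mult_order g N"
    using finite_field_primitive_element card_K N_def by metis
  have conjugates: "inj_on (\<lambda>t. g ^ (CHAR('K) ^ t)) {..<a}"
    unfolding char_K N_def using \<open>p > 1\<close>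
    by (intro primitive_divisor_inj_on_conjugates[OF g[unfolded N_def]] primitive_divisor_power_minus_1)
       simp_all
  have kernel: "map_poly (of_int :: int \<Rightarrow> 'F) T = 0"
    if "degree T < a" "poly (map_poly of_int T) g = 0" for T
  proof (rule poly_eqI)
    fix i
    have "int CHAR('F) dvd coeff T i"
      using CHAR_dvd_coeff_if_poly_of_int_root[OF _ conjugates that] \<open>prime p\<close>
      by (simp add: char_K char_F)
    then show "coeff (map_poly of_int T) i = coeff (0 :: 'F poly) i"
      by (simp add: coeff_map_poly of_int_eq_0_iff_char_dvd)
  qed
  have surj: "\<exists>P. degree P < a \<and> poly (map_poly of_int P) g = x" for x
    using finite_field_poly_of_int_surj[OF _ _ conjugates] \<open>prime p\<close> card_K char_K by metis
  then obtain G where G: "lead_coeff G = 1" "degree G = a" "poly (map_poly of_int G) g = 0"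
    using monic_int_poly_root by metis
  have "map_poly (of_int :: int \<Rightarrow> 'F) G dvd map_poly of_int (Polynomial.monom 1 N - 1)"
    using g G by (intro map_poly_of_int_dvd_if_root[where \<omega> = g] kernel)
      (simp_all add: has_mult_order_def map_poly_of_int_simps map_poly_monom poly_monom)
  moreover obtain \<zeta> :: 'F where "has_mult_order \<zeta> N"
  proof (rule finite_field_exists_mult_order)
    show "N dvd card (UNIV :: 'F set) - 1"
      using power_minus_1_dvd_power_minus_1[of "p ^ a" b] \<open>p > 1\<close> by (simp add: card_F N_def power_mult)
  qed
  moreover have "degree (map_poly (of_int :: int \<Rightarrow> 'F) G) = a"
    using degree_map_poly_of_int_monic G by metis
  moreover have "a > 0"
    using card_K finite_field_card_ge_2[where 'a='K] by (cases a) auto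
  ultimately obtain \<omega>' :: 'F where "poly (map_poly of_int G) \<omega>' = 0"
    using dvd_X_power_minus_1_has_root by (fastforce simp: map_poly_of_int_simps map_poly_monom)
  then show ?thesis
    using field_hom_of_common_root[OF _ G(1,3)] surj kernel G(2) that by metis
qed

lemma cart_power_arc_iff:
  assumes irrefl: "\<And>x. \<not> A x x"
  shows "cart_power_arc b A v w \<longleftrightarrow> (\<exists>j<b. A (v j) (w j) \<and> (\<forall>i<b. i \<noteq> j \<longrightarrow> v i = w i))"
  unfolding cart_power_arc_def
proof
  assume "\<exists>j<b. A (v j) (w j) \<and> (\<forall>i<b. i \<noteq> j \<longrightarrow> v i = w i)"
  then obtain j where j: "j < b" "A (v j) (w j)" "\<forall>i<b. i \<noteq> j \<longrightarrow> v i = w i"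
    by blast
  show "\<exists>!j. j < b \<and> A (v j) (w j) \<and> (\<forall>i<b. i \<noteq> j \<longrightarrow> v i = w i)"
  proof (rule ex1I[of _ j])
    fix j' assume "j' < b \<and> A (v j') (w j') \<and> (\<forall>i<b. i \<noteq> j' \<longrightarrow> v i = w i)"
    with j irrefl show "j' = j"
      by metis
  qed (use j in blast)
qed blast

lemma digraph_iso_cart_power_Cayley:
  fixes \<Phi> :: "(nat \<Rightarrow> 'K::{finite,ab_group_add}) \<Rightarrow> 'F::{finite,ab_group_add}"
  assumes diff: "\<And>v w. \<Phi> (\<lambda>i. v i - w i) = \<Phi> v - \<Phi> w"
    and kernel: "\<And>d. \<Phi> d = 0 \<Longrightarrow> \<forall>i<b. d i = 0"
    and card: "card (UNIV :: 'F set) = card (UNIV :: 'K set) ^ b"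
    and connection: "\<And>d. R (\<Phi> d) \<longleftrightarrow> (\<exists>j<b. T (d j) \<and> (\<forall>i<b. i \<noteq> j \<longrightarrow> d i = 0))"
    and "\<not> T 0"
  shows "digraph_iso (\<lambda>u v. R (v - u)) (cart_power_verts b) (cart_power_arc b (\<lambda>x y. T (y - x)))"
proof -
  define V where "V = (cart_power_verts b :: (nat \<Rightarrow> 'K) set)"
  have "inj_on \<Phi> V"
  proof (rule inj_onI)
    fix v w assume "v \<in> V" "w \<in> V" "\<Phi> v = \<Phi> w"
    then have "\<forall>i<b. v i = w i"
      using kernel[of "\<lambda>i. v i - w i"] diff by simp
    with \<open>v \<in> V\<close> \<open>w \<in> V\<close> show "v = w"
      by (intro PiE_ext[of _ "{..<b}" "\<lambda>_. UNIV"]) (auto simp: V_def cart_power_verts_def)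
  qed
  moreover have "card (\<Phi> ` V) = card (UNIV :: 'F set)"
    using calculation card by (simp add: card_image V_def cart_power_verts_def card_PiE)
  then have "\<Phi> ` V = UNIV"
    by (intro card_subset_eq) simp_all
  ultimately have bij: "bij_betw \<Phi> V UNIV"
    by (simp add: bij_betw_def)
  define f where "f = inv_into V \<Phi>"
  have \<Phi>_f: "\<Phi> (f u) = u" for u
    using bij by (simp add: f_def bij_betw_inv_into_right)
  have "R (v - u) \<longleftrightarrow> cart_power_arc b (\<lambda>x y. T (y - x)) (f u) (f v)" for u v
  proof -
    have "v - u = \<Phi> (\<lambda>i. f v i - f u i)"
      by (simp add: diff \<Phi>_f)
    then show ?thesis
      using \<open>\<not> T 0\<close> by (simp add: connection cart_power_arc_iff eq_commute[of "f u _"])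
  qed
  moreover have "bij_betw f UNIV V"
    unfolding f_def by (rule bij_betw_inv_into[OF bij])
  ultimately show ?thesis
    unfolding digraph_iso_def V_def by blast
qed

lemma (in field_hom) image_roots_of_unity:
  fixes \<omega> :: 'a and \<theta> :: 'b
  assumes "has_mult_order \<omega> n" and "has_mult_order \<theta> n"
  shows "\<psi> ` {x. x ^ n = 1} = {y. y ^ n = 1}"
proof (rule card_seteq)
  show "finite {y::'b. y ^ n = 1}"
    using assms(2) roots_of_unity_finite_card_le by (auto simp: has_mult_order_def)
  show "\<psi> ` {x. x ^ n = 1} \<subseteq> {y. y ^ n = 1}"
    by (auto simp: hom_1 simp flip: hom_power)
  show "card {y::'b. y ^ n = 1} \<le> card (\<psi> ` {x. x ^ n = 1})"
    using card_roots_of_unity[OF assms(1)] card_roots_of_unity[OF assms(2)]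
      card_image[OF inj_on_subset[OF inj]] by simp
qed

definition power_basis_map :: "('a \<Rightarrow> 'b::comm_ring_1) \<Rightarrow> 'b \<Rightarrow> nat \<Rightarrow> (nat \<Rightarrow> 'a) \<Rightarrow> 'b" where
  "power_basis_map \<psi> \<zeta> b d = (\<Sum>i<b. \<psi> (d i) * \<zeta> ^ i)"

lemma (in field_hom) power_basis_map_diff:
  "power_basis_map \<psi> \<zeta> b (\<lambda>i. v i - w i) = power_basis_map \<psi> \<zeta> b v - power_basis_map \<psi> \<zeta> b w"
  by (simp add: power_basis_map_def hom_diff sum_subtractf algebra_simps)

lemma (in field_hom) power_basis_map_single:
  assumes "j < b"
  shows "power_basis_map \<psi> \<zeta> b (\<lambda>i. if i = j then e else 0) = \<psi> e * \<zeta> ^ j"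
  using assms by (simp add: power_basis_map_def hom_0 if_distrib[of \<psi>] if_distrib[of "\<lambda>x. x * _"] sum.delta
      cong: if_cong)

lemma power_basis_map_eq_0:
  fixes \<psi> :: "'K::{finite,field} \<Rightarrow> 'F::field"
  assumes "field_hom \<psi>" and char: "prime CHAR('F)"
    and card: "card (UNIV :: 'K set) = CHAR('F) ^ a"
    and \<zeta>: "has_mult_order \<zeta> N" and prim: "primitive_divisor (card (UNIV :: 'K set)) b N"
    and "power_basis_map \<psi> \<zeta> b d = 0"
  shows "\<forall>i<b. d i = 0"
proof (intro allI impI)
  interpret field_hom \<psi> by fact
  fix i assume "i < b"
  have conjugates: "inj_on (\<lambda>t. \<zeta> ^ (card (UNIV :: 'K set) ^ t)) {..<b}"
    using primitive_divisor_inj_on_conjugates[OF \<zeta> prim] by (simp add: finite_UNIV_card_ge_0)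
  have "\<psi> (d j) ^ card (UNIV :: 'K set) = \<psi> (d j)" for j
    by (simp add: finite_field_power_card flip: hom_power)
  moreover have "(\<Sum>j<b. \<psi> (d j) * \<zeta> ^ j) = 0"
    using assms(6) by (simp add: power_basis_map_def)
  ultimately have "\<psi> (d i) = 0"
    by (rule Frobenius_fixed_coeffs_eq_0[OF char card _ conjugates _ \<open>i < b\<close>])
  then show "d i = 0"
    by (simp add: hom_eq_0_iff)
qed

text \<open>Write \<open>\<zeta> ^ m = \<zeta> ^ j * \<theta> ^ r\<close> with \<open>m = j + b * r\<close>, \<open>j < b\<close> and \<open>\<theta> = \<zeta> ^ b\<close>: since \<open>\<theta>\<close> has
  order \<open>c\<close>, \<open>\<theta> ^ r\<close> is the image of a \<open>c\<close>-th root of unity of \<open>K\<close>.\<close>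
lemma power_basis_map_root_of_unity_iff:
  fixes \<psi> :: "'K::field \<Rightarrow> 'F::field" and \<omega> :: 'K and \<zeta> :: 'F
  assumes "field_hom \<psi>"
    and \<zeta>: "has_mult_order \<zeta> (b * c)" and gen: "\<And>y. y ^ (b * c) = 1 \<Longrightarrow> \<exists>m. y = \<zeta> ^ m"
    and \<omega>: "has_mult_order \<omega> c"
    and kernel: "\<And>d. power_basis_map \<psi> \<zeta> b d = 0 \<Longrightarrow> \<forall>i<b. d i = 0"
  shows "power_basis_map \<psi> \<zeta> b d ^ (b * c) = 1 \<longleftrightarrow> (\<exists>j<b. d j ^ c = 1 \<and> (\<forall>i<b. i \<noteq> j \<longrightarrow> d i = 0))"
proof
  interpret field_hom \<psi> by fact
  assume "power_basis_map \<psi> \<zeta> b d ^ (b * c) = 1"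
  then obtain m where m: "power_basis_map \<psi> \<zeta> b d = \<zeta> ^ m"
    using gen by blast
  have "b > 0"
    using \<zeta> by (simp add: has_mult_order_def)
  define j where "j = m mod b"
  have "j < b"
    using \<open>b > 0\<close> by (simp add: j_def)
  have "\<zeta> ^ m = \<zeta> ^ j * (\<zeta> ^ b) ^ (m div b)"
    by (metis j_def div_mult_mod_eq mult.commute power_add power_mult)
  moreover have "(\<zeta> ^ b) ^ (m div b) \<in> \<psi> ` {x. x ^ c = 1}"
    using has_mult_order_power[OF \<zeta>] \<zeta>
    by (simp add: image_roots_of_unity[OF \<omega> has_mult_order_power[OF \<zeta>]] has_mult_order_def
        flip: power_mult) (metis mult.commute power_mult power_one)
  then obtain e where e: "e ^ c = 1" "(\<zeta> ^ b) ^ (m div b) = \<psi> e"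
    by auto
  ultimately have "power_basis_map \<psi> \<zeta> b (\<lambda>i. d i - (if i = j then e else 0)) = 0"
    by (simp add: power_basis_map_diff power_basis_map_single[OF \<open>j < b\<close>] m mult.commute)
  then have "\<forall>i<b. d i = (if i = j then e else 0)"
    using kernel by fastforce
  with \<open>j < b\<close> e(1) show "\<exists>j<b. d j ^ c = 1 \<and> (\<forall>i<b. i \<noteq> j \<longrightarrow> d i = 0)"
    by auto
next
  interpret field_hom \<psi> by fact
  assume "\<exists>j<b. d j ^ c = 1 \<and> (\<forall>i<b. i \<noteq> j \<longrightarrow> d i = 0)"
  then obtain j where j: "j < b" "d j ^ c = 1" "\<forall>i<b. i \<noteq> j \<longrightarrow> d i = 0"
    by blast
  then have "power_basis_map \<psi> \<zeta> b d = \<psi> (d j) * \<zeta> ^ j"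
    by (simp add: power_basis_map_def hom_0 sum.remove[of _ j] sum.neutral)
  also have "(\<psi> (d j) * \<zeta> ^ j) ^ (b * c) = \<psi> (d j ^ c) ^ b * (\<zeta> ^ (b * c)) ^ j"
    by (simp add: hom_power power_mult_distrib ac_simps flip: power_mult)
  finally show "power_basis_map \<psi> \<zeta> b d ^ (b * c) = 1"
    using j(2) \<zeta> by (simp add: hom_1 has_mult_order_def)
qed

theorem mainTheorem2:
  fixes p a b c :: nat
  assumes "prime p" and "odd p"
    and "a > 0" and "b > 0" and "c > 0"
    and "primitive_divisor p a c"
    and "primitive_divisor p (a * b) (b * c)"
    and "odd (b * c)"
    and "card (UNIV :: 'F::{finite,field} set) = p ^ (a * b)"
    and "card (UNIV :: 'K::{finite,field} set) = p ^ a"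
  shows "digraph_iso
           (gpaley_arc ((p ^ (a * b) - 1) div (b * c)) :: 'F \<Rightarrow> 'F \<Rightarrow> bool)
           (cart_power_verts b)
           (cart_power_arc b (gpaley_arc ((p ^ a - 1) div c) :: 'K \<Rightarrow> 'K \<Rightarrow> bool))"
proof -
  note prime = assms(1) and prim_K = assms(6) and prim_F = assms(7)
    and card_F = assms(9) and card_K = assms(10)
  obtain \<psi> :: "'K \<Rightarrow> 'F" where \<psi>: "field_hom \<psi>"
    using finite_field_embedding[OF prime card_K card_F] by blast
  have k_K: "(p ^ a - 1) div c * c = card (UNIV :: 'K set) - 1"
    using prim_K card_K by (simp add: primitive_divisor_def)
  have k_F: "(p ^ (a * b) - 1) div (b * c) * (b * c) = card (UNIV :: 'F set) - 1"
    using prim_F card_F by (simp add: primitive_divisor_def)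
  obtain \<omega> :: 'K where \<omega>: "has_mult_order \<omega> c"
    using finite_field_roots_of_unity_cyclic[OF k_K] by blast
  obtain \<zeta> :: 'F where \<zeta>: "has_mult_order \<zeta> (b * c)" and gen: "\<And>y. y ^ (b * c) = 1 \<Longrightarrow> \<exists>m. y = \<zeta> ^ m"
    using finite_field_roots_of_unity_cyclic[OF k_F] by blast
  have kernel: "\<forall>i<b. d i = 0" if "power_basis_map \<psi> \<zeta> b d = 0" for d
    using power_basis_map_eq_0[OF \<psi> _ _ \<zeta> _ that] primitive_divisor_power_base[OF prim_F \<open>a > 0\<close>]
      prime card_K card_F by (simp add: CHAR_finite_field)
  show ?thesis
    unfolding gpaley_arc_iff_root_of_unity[OF k_F, abs_def] gpaley_arc_iff_root_of_unity[OF k_K, abs_def]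
  proof (rule digraph_iso_cart_power_Cayley[where \<Phi> = "power_basis_map \<psi> \<zeta> b"
        and R = "\<lambda>y. y ^ (b * c) = 1" and T = "\<lambda>x. x ^ c = 1"])
    show "power_basis_map \<psi> \<zeta> b (\<lambda>i. v i - w i) = power_basis_map \<psi> \<zeta> b v - power_basis_map \<psi> \<zeta> b w"
      for v w by (rule field_hom.power_basis_map_diff[OF \<psi>])
    show "power_basis_map \<psi> \<zeta> b d ^ (b * c) = 1 \<longleftrightarrow> (\<exists>j<b. d j ^ c = 1 \<and> (\<forall>i<b. i \<noteq> j \<longrightarrow> d i = 0))"
      for d by (rule power_basis_map_root_of_unity_iff[OF \<psi> \<zeta> gen \<omega> kernel])
  qed (use kernel \<open>c > 0\<close> in \<open>simp_all add: card_F card_K power_mult power_0_left\<close>)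
qed

end
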